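(* Let $S$ be a species tree, $(T,\sigma)$ a gene tree, and $\mu:V(T)\to V(S)\cup E(S)$ a reconciliation map without horizontal gene transfer (satisfying (R0), (R1), (R2), (R3.i), (R3.ii)) that in addition satisfies axiom (R4). Let $x,y\in L(T)$ be two genes with $\sigma(x)\neq\sigma(y)$. If $\operatorname{lca}_S(\sigma(x),\sigma(y))\prec_S \mu(\operatorname{lca}_T(x,y))$, then $\operatorname{lca}_T(x,y)$ is a duplication event, i.e., $\mu(\operatorname{lca}_T(x,y))\in E(S)$.
   Context: A planted phylogenetic tree $T$ has a distinguished leaf $0_T$ (the planted root) whose unique neighbour $\rho_T$ is the root; every other non-leaf vertex has at least two children. $L(T)$ denotes the leaves other than $0_T$. For vertices, $a\preceq_T b$ means $b$ lies on the path from $a$ to $0_T$; $\operatorname{lca}_T(A)$ is the $\preceq_T$-minimal vertex that is $\succeq_T$ every element of $A$. A species tree $S$ is a planted phylogenetic tree with planted root $0_S$, root $\rho_S$ and leaf set $\mathscr{S}$ (the species); $V^0(S)$ denotes the inner vertices of $S$ (neither leaves nor $0_S$). The order $\preceq_S$ is extended to $V(S)\cup E(S)$ by regarding each edge $e=pq$ ($q$ a child of $p$) as lying strictly between $q$ and $p$: $q\prec_S e\prec_S p$, a vertex $w$ satisfies $w\prec_S e$ iff $w\preceq_S q$ and $e\prec_S w$ iff $p\preceq_S w$, and for edges $e=pq,e'=p'q'$, $e\prec_S e'$ iff $p\preceq_S q'$; $\operatorname{lca}_S$ of elements of $V(S)\cup E(S)$ is the $\preceq_S$-minimal vertex above all of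 them. A gene tree $(T,\sigma)$ is a planted phylogenetic tree with $\sigma:L(T)\to\mathscr{S}$. A reconciliation map without horizontal gene transfer is $\mu:V(T)\to V(S)\cup E(S)$ with: (R0) $\mu(v)=0_S$ iff $v=0_T$; (R1) $\mu(v)=\sigma(v)$ for $v\in L(T)$; (R2) $v\prec_T w\Rightarrow\mu(v)\preceq_S\mu(w)$; and for each $v$ with $\mu(v)\in V^0(S)$: (R3.i) $\mu(v)=\operatorname{lca}_S(\mu(v'),\mu(v''))$ for at least two distinct children $v',v''$ of $v$; (R3.ii) $\mu(v'),\mu(v'')$ are $\preceq_S$-incomparable for any two distinct children $v',v''$ of $v$. Axiom (R4): for leaves $x,y,z$ of $T$, if $\mu(\operatorname{lca}_T(x,y))=\mu(\operatorname{lca}_T(x,z))\in V^0(S)$ then $\operatorname{lca}_S(\sigma(x),\sigma(y))=\operatorname{lca}_S(\sigma(x),\sigma(z))$. A vertex $v$ of $T$ is a duplication if $\mu(v)\in E(S)$ and a speciation if $\mu(v)\in V^0(S)$. *)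

theory Defs
  imports Main
begin

text \<open>A rooted tree is given by a vertex set V, a set E of directed edges (p,q)
  with q a child of p, and a distinguished vertex r0 (the planted root 0_T),
  from which all edges point away.\<close>

definition children :: "('v \<times> 'v) set \<Rightarrow> 'v \<Rightarrow> 'v set" where
  "children E v = {w. (v, w) \<in> E}"

definition planted_phylo_tree :: "'v set \<Rightarrow> ('v \<times> 'v) set \<Rightarrow> 'v \<Rightarrow> bool" where
  "planted_phylo_tree V E r0 \<longleftrightarrow>
     finite V \<and> r0 \<in> V \<and> E \<subseteq> V \<times> V \<and> acyclic E \<and>
     (\<forall>v\<in>V. (r0, v) \<in> E\<^sup>*) \<and>
     (\<forall>v\<in>V. v \<noteq> r0 \<longrightarrow> (\<exists>!p. (p, v) \<in> E)) \<and>
     (\<forall>p. (p, r0) \<notin> E) \<and>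
     card (children E r0) = 1 \<and>
     (\<forall>v\<in>V. v \<noteq> r0 \<and> children E v \<noteq> {} \<longrightarrow> card (children E v) \<ge> 2)"

definition root_of :: "('v \<times> 'v) set \<Rightarrow> 'v \<Rightarrow> 'v" where
  "root_of E r0 = (THE v. (r0, v) \<in> E)"

definition leaves :: "'v set \<Rightarrow> ('v \<times> 'v) set \<Rightarrow> 'v \<Rightarrow> 'v set" where
  "leaves V E r0 = {v \<in> V. v \<noteq> r0 \<and> children E v = {}}"

definition inner :: "'v set \<Rightarrow> ('v \<times> 'v) set \<Rightarrow> 'v \<Rightarrow> 'v set" where
  "inner V E r0 = {v \<in> V. v \<noteq> r0 \<and> children E v \<noteq> {}}"

definition tle :: "('v \<times> 'v) set \<Rightarrow> 'v \<Rightarrow> 'v \<Rightarrow> bool" where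
  "tle E a b \<longleftrightarrow> (b, a) \<in> E\<^sup>*"

definition tless :: "('v \<times> 'v) set \<Rightarrow> 'v \<Rightarrow> 'v \<Rightarrow> bool" where
  "tless E a b \<longleftrightarrow> tle E a b \<and> a \<noteq> b"

definition lcaT :: "'v set \<Rightarrow> ('v \<times> 'v) set \<Rightarrow> 'v \<Rightarrow> 'v \<Rightarrow> 'v" where
  "lcaT V E x y = (THE v. v \<in> V \<and> tle E x v \<and> tle E y v \<and>
       (\<forall>w\<in>V. tle E x w \<and> tle E y w \<longrightarrow> tle E v w))"

text \<open>Elements of V(S) \<union> E(S).\<close>
datatype 'v elem = Vx 'v | Ed 'v 'v

definition is_elem :: "'v set \<Rightarrow> ('v \<times> 'v) set \<Rightarrow> 'v elem \<Rightarrow> bool" where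
  "is_elem V E a \<longleftrightarrow> (case a of Vx v \<Rightarrow> v \<in> V | Ed p q \<Rightarrow> (p, q) \<in> E)"

text \<open>The extended order \<preceq>_S on V(S) \<union> E(S); an edge (p,q) lies strictly between q and p.\<close>
fun ele :: "('v \<times> 'v) set \<Rightarrow> 'v elem \<Rightarrow> 'v elem \<Rightarrow> bool" where
  "ele E (Vx a) (Vx b) \<longleftrightarrow> tle E a b"
| "ele E (Vx w) (Ed p q) \<longleftrightarrow> tle E w q"
| "ele E (Ed p q) (Vx w) \<longleftrightarrow> tle E p w"
| "ele E (Ed p q) (Ed p' q') \<longleftrightarrow> (p = p' \<and> q = q') \<or> tle E p q'"

definition eless :: "('v \<times> 'v) set \<Rightarrow> 'v elem \<Rightarrow> 'v elem \<Rightarrow> bool" where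
  "eless E a b \<longleftrightarrow> ele E a b \<and> a \<noteq> b"

definition lcaS :: "'v set \<Rightarrow> ('v \<times> 'v) set \<Rightarrow> 'v elem \<Rightarrow> 'v elem \<Rightarrow> 'v" where
  "lcaS V E a b = (THE v. v \<in> V \<and> ele E a (Vx v) \<and> ele E b (Vx v) \<and>
       (\<forall>w\<in>V. ele E a (Vx w) \<and> ele E b (Vx w) \<longrightarrow> tle E v w))"

definition gene_tree ::
  "'g set \<Rightarrow> ('g \<times> 'g) set \<Rightarrow> 'g \<Rightarrow> ('g \<Rightarrow> 's) \<Rightarrow> 's set \<Rightarrow> ('s \<times> 's) set \<Rightarrow> 's \<Rightarrow> bool" where
  "gene_tree VT ET rT \<sigma> VS ES rS \<longleftrightarrow> planted_phylo_tree VT ET rT \<and>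
     (\<forall>v\<in>leaves VT ET rT. \<sigma> v \<in> leaves VS ES rS)"

definition reconciliation ::
  "'g set \<Rightarrow> ('g \<times> 'g) set \<Rightarrow> 'g \<Rightarrow> ('g \<Rightarrow> 's) \<Rightarrow>
   's set \<Rightarrow> ('s \<times> 's) set \<Rightarrow> 's \<Rightarrow> ('g \<Rightarrow> 's elem) \<Rightarrow> bool" where
  "reconciliation VT ET rT \<sigma> VS ES rS \<mu> \<longleftrightarrow>
     (\<forall>v\<in>VT. is_elem VS ES (\<mu> v)) \<and>
     (\<forall>v\<in>VT. \<mu> v = Vx rS \<longleftrightarrow> v = rT) \<and>
     (\<forall>v\<in>leaves VT ET rT. \<mu> v = Vx (\<sigma> v)) \<and>
     (\<forall>v\<in>VT. \<forall>w\<in>VT. tless ET v w \<longrightarrow> ele ES (\<mu> v) (\<mu> w)) \<and>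
     (\<forall>v\<in>VT. \<mu> v \<in> Vx ` inner VS ES rS \<longrightarrow>
        (\<exists>v'\<in>children ET v. \<exists>v''\<in>children ET v. v' \<noteq> v'' \<and>
            \<mu> v = Vx (lcaS VS ES (\<mu> v') (\<mu> v''))) \<and>
        (\<forall>v'\<in>children ET v. \<forall>v''\<in>children ET v. v' \<noteq> v'' \<longrightarrow>
            \<not> ele ES (\<mu> v') (\<mu> v'') \<and> \<not> ele ES (\<mu> v'') (\<mu> v')))"

definition axiom_R4 ::
  "'g set \<Rightarrow> ('g \<times> 'g) set \<Rightarrow> 'g \<Rightarrow> ('g \<Rightarrow> 's) \<Rightarrow>
   's set \<Rightarrow> ('s \<times> 's) set \<Rightarrow> 's \<Rightarrow> ('g \<Rightarrow> 's elem) \<Rightarrow> bool" where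
  "axiom_R4 VT ET rT \<sigma> VS ES rS \<mu> \<longleftrightarrow>
     (\<forall>x\<in>leaves VT ET rT. \<forall>y\<in>leaves VT ET rT. \<forall>z\<in>leaves VT ET rT.
        \<mu> (lcaT VT ET x y) = \<mu> (lcaT VT ET x z) \<and> \<mu> (lcaT VT ET x y) \<in> Vx ` inner VS ES rS
        \<longrightarrow> lcaS VS ES (Vx (\<sigma> x)) (Vx (\<sigma> y)) = lcaS VS ES (Vx (\<sigma> x)) (Vx (\<sigma> z)))"

definition duplication :: "('s \<times> 's) set \<Rightarrow> ('g \<Rightarrow> 's elem) \<Rightarrow> 'g \<Rightarrow> bool" where
  "duplication ES \<mu> v \<longleftrightarrow> (\<exists>p q. (p, q) \<in> ES \<and> \<mu> v = Ed p q)"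

end

theory Submission imports Defs begin

text \<open>Suppose v = lca_T(x,y) is mapped to a vertex w of S (not to an edge) lying strictly
  above l = lca_S(\<sigma> x, \<sigma> y), and let c0 be the child of w towards l. By (R3.ii) no child of v
  is mapped to w itself, so every child of v above a leaf whose species lies below c0 is mapped
  onto or below the edge (w,c0). By (R3.i) not every child of v is, for otherwise \<mu> v would lie
  below c0. A child off that edge has a leaf z below it whose species lies under another child
  of w; then lca_T(x,z) = v but lca_S(\<sigma> x, \<sigma> z) = w \<noteq> l, contradicting (R4).\<close>

locale planted_tree =
  fixes V :: "'v set" and E :: "('v \<times> 'v) set" and r0 :: 'v
  assumes planted_phylo_tree: "planted_phylo_tree V E r0"
begin

lemma finite_V: "finite V"
  and edges_subset: "E \<subseteq> V \<times> V"
  and acyclic_edges: "acyclic E"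
  and reachable_from_r0: "\<And>v. v \<in> V \<Longrightarrow> (r0, v) \<in> E\<^sup>*"
  and unique_parent: "\<And>v. v \<in> V \<Longrightarrow> v \<noteq> r0 \<Longrightarrow> \<exists>!p. (p, v) \<in> E"
  and no_parent_r0: "\<And>p. (p, r0) \<notin> E"
  and card_children_r0: "card (children E r0) = 1"
  using planted_phylo_tree unfolding planted_phylo_tree_def by auto

lemma edge_in_V: "(a, b) \<in> E \<Longrightarrow> a \<in> V \<and> b \<in> V"
  using edges_subset by auto

lemma rtrancl_target_in_V: "(a, b) \<in> E\<^sup>* \<Longrightarrow> a \<in> V \<Longrightarrow> b \<in> V"
  by (erule rtranclE) (auto dest: edge_in_V)

lemma rtrancl_source_in_V: "(a, b) \<in> E\<^sup>* \<Longrightarrow> b \<in> V \<Longrightarrow> a \<in> V"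
  by (erule converse_rtranclE) (auto dest: edge_in_V)

lemma parent_eq: "(p, v) \<in> E \<Longrightarrow> (q, v) \<in> E \<Longrightarrow> p = q"
  using unique_parent edge_in_V no_parent_r0 by metis

lemma rtrancl_antisym: "(a, b) \<in> E\<^sup>* \<Longrightarrow> (b, a) \<in> E\<^sup>* \<Longrightarrow> a = b"
  using acyclic_edges unfolding acyclic_def
  by (metis rtrancl_trancl_trancl rtranclD)

lemma edge_not_rtrancl_back: "(a, b) \<in> E \<Longrightarrow> (b, a) \<notin> E\<^sup>*"
  using acyclic_edges unfolding acyclic_def
  by (metis r_into_rtrancl rtrancl_antisym trancl.r_into_trancl)

lemma child_on_path: "(w, s) \<in> E\<^sup>* \<Longrightarrow> w \<noteq> s \<Longrightarrow> \<exists>c. (w, c) \<in> E \<and> (c, s) \<in> E\<^sup>*"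
  by (metis converse_rtranclE)

lemma ancestors_comparable:
  "(a, v) \<in> E\<^sup>* \<Longrightarrow> (b, v) \<in> E\<^sup>* \<Longrightarrow> (a, b) \<in> E\<^sup>* \<or> (b, a) \<in> E\<^sup>*"
proof (induction arbitrary: b rule: rtrancl_induct)
  case base
  then show ?case by blast
next
  case (step u v' b)
  from step.prems show ?case
  proof (cases rule: rtranclE)
    case base
    then show ?thesis using step by (meson rtrancl_into_rtrancl)
  next
    case (step p)
    then have "p = u" using parent_eq \<open>(u, v') \<in> E\<close> by blast
    then show ?thesis using step step.IH by blast
  qed
qed

lemma nothing_between_edge:
  assumes "(w, c) \<in> E" "(u, c) \<in> E\<^sup>*" "(w, u) \<in> E\<^sup>*"
  shows "u = c \<or> u = w"
proof (cases "u = c")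
  case False
  with assms(2) obtain p where "(u, p) \<in> E\<^sup>*" "(p, c) \<in> E"
    by (metis rtranclE)
  then have "(u, w) \<in> E\<^sup>*" using parent_eq assms(1) by blast
  then show ?thesis using rtrancl_antisym assms(3) by blast
qed simp

lemma sibling_rtrancl_eq: "(w, c1) \<in> E \<Longrightarrow> (w, c2) \<in> E \<Longrightarrow> (c1, c2) \<in> E\<^sup>* \<Longrightarrow> c1 = c2"
  using nothing_between_edge[of w c2 c1] edge_not_rtrancl_back by blast

lemma wf_converse_edges: "wf (E\<inverse>)"
proof -
  have "finite E" using finite_V edges_subset by (meson finite_SigmaI finite_subset)
  then show ?thesis using acyclic_edges by (simp add: finite_acyclic_wf_converse)
qed

lemma leaf_below:
  assumes "u \<in> V" "u \<noteq> r0"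
  obtains z where "z \<in> leaves V E r0" "(u, z) \<in> E\<^sup>*"
proof -
  obtain d where d: "(u, d) \<in> E\<^sup>*" and d_min: "\<And>y. (d, y) \<in> E \<Longrightarrow> (u, y) \<notin> E\<^sup>*"
    using wfE_min[OF wf_converse_edges, of u "{d. (u, d) \<in> E\<^sup>*}"] by auto
  have "children E d = {}"
    using d d_min unfolding children_def by (auto intro: rtrancl_into_rtrancl)
  moreover have "d \<in> V" using d assms(1) rtrancl_target_in_V by blast
  moreover have "d \<noteq> r0"
    using d assms rtrancl_antisym reachable_from_r0 by blast
  ultimately show ?thesis using that d unfolding leaves_def by blast
qed

lemma leaf_rtrancl_eq: "x \<in> leaves V E r0 \<Longrightarrow> (x, u) \<in> E\<^sup>* \<Longrightarrow> u = x"
  unfolding leaves_def children_def by (auto elim: converse_rtranclE)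

lemma fork_not_r0: "(v, c1) \<in> E \<Longrightarrow> (v, c2) \<in> E \<Longrightarrow> c1 \<noteq> c2 \<Longrightarrow> v \<noteq> r0"
  using card_children_r0 unfolding children_def
  by (metis card_1_singletonE mem_Collect_eq singletonD)

lemma lowest_common_ancestor_exists:
  assumes "a \<in> V" "b \<in> V"
  obtains v where "v \<in> V" "(v, a) \<in> E\<^sup>*" "(v, b) \<in> E\<^sup>*"
    "\<And>u. (u, a) \<in> E\<^sup>* \<Longrightarrow> (u, b) \<in> E\<^sup>* \<Longrightarrow> (u, v) \<in> E\<^sup>*"
proof -
  define A where "A = {v. (v, a) \<in> E\<^sup>* \<and> (v, b) \<in> E\<^sup>*}"
  have "r0 \<in> A" unfolding A_def using reachable_from_r0 assms by simp
  then obtain v where v: "v \<in> A" and v_min: "\<And>c. (v, c) \<in> E \<Longrightarrow> c \<notin> A"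
    using wfE_min[OF wf_converse_edges] by (metis converse_iff)
  have "(u, v) \<in> E\<^sup>*" if "(u, a) \<in> E\<^sup>*" "(u, b) \<in> E\<^sup>*" for u
  proof (rule ccontr)
    assume "(u, v) \<notin> E\<^sup>*"
    then have "(v, u) \<in> E\<^sup>*" "v \<noteq> u"
      using ancestors_comparable[of u a v] that v unfolding A_def by auto
    then obtain c where c: "(v, c) \<in> E" "(c, u) \<in> E\<^sup>*" using child_on_path by blast
    then have "(c, a) \<in> E\<^sup>*" "(c, b) \<in> E\<^sup>*" using that by (meson rtrancl_trans)+
    then show False using v_min c(1) unfolding A_def by blast
  qed
  moreover have "v \<in> V" using v assms(1) rtrancl_source_in_V unfolding A_def by blast
  ultimately show ?thesis using that v unfolding A_def by blast
qed

lemma lcaT_spec: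
  assumes "a \<in> V" "b \<in> V"
  shows "lcaT V E a b \<in> V" "(lcaT V E a b, a) \<in> E\<^sup>*" "(lcaT V E a b, b) \<in> E\<^sup>*"
    and "\<And>u. (u, a) \<in> E\<^sup>* \<Longrightarrow> (u, b) \<in> E\<^sup>* \<Longrightarrow> (u, lcaT V E a b) \<in> E\<^sup>*"
proof -
  obtain v where v: "v \<in> V" "(v, a) \<in> E\<^sup>*" "(v, b) \<in> E\<^sup>*"
    "\<And>u. (u, a) \<in> E\<^sup>* \<Longrightarrow> (u, b) \<in> E\<^sup>* \<Longrightarrow> (u, v) \<in> E\<^sup>*"
    using lowest_common_ancestor_exists[OF assms] by blast
  have "lcaT V E a b = v"
    unfolding lcaT_def tle_def
    by (rule the_equality) (use v rtrancl_antisym in blast)+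
  with v show "lcaT V E a b \<in> V" "(lcaT V E a b, a) \<in> E\<^sup>*" "(lcaT V E a b, b) \<in> E\<^sup>*"
    "\<And>u. (u, a) \<in> E\<^sup>* \<Longrightarrow> (u, b) \<in> E\<^sup>* \<Longrightarrow> (u, lcaT V E a b) \<in> E\<^sup>*"
    by simp_all
qed

lemma lcaT_at_fork:
  assumes "(v, c1) \<in> E" "(v, c2) \<in> E" "c1 \<noteq> c2" "(c1, a) \<in> E\<^sup>*" "(c2, b) \<in> E\<^sup>*"
  shows "lcaT V E a b = v"
proof (rule ccontr)
  have ab: "a \<in> V" "b \<in> V"
    using assms(1,2,4,5) edge_in_V rtrancl_target_in_V by blast+
  define m where "m = lcaT V E a b"
  assume "lcaT V E a b \<noteq> v"
  moreover have "(v, m) \<in> E\<^sup>*"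
    using lcaT_spec(4)[OF ab] assms unfolding m_def by (meson converse_rtrancl_into_rtrancl)
  ultimately obtain c where c: "(v, c) \<in> E" "(c, m) \<in> E\<^sup>*"
    using child_on_path unfolding m_def by blast
  have "(c, a) \<in> E\<^sup>*" "(c, b) \<in> E\<^sup>*"
    using c(2) lcaT_spec(2,3)[OF ab] unfolding m_def by (meson rtrancl_trans)+
  then have "(c, c1) \<in> E\<^sup>* \<or> (c1, c) \<in> E\<^sup>*" "(c, c2) \<in> E\<^sup>* \<or> (c2, c) \<in> E\<^sup>*"
    using ancestors_comparable assms(4,5) by blast+
  then have "c = c1" "c = c2"
    using sibling_rtrancl_eq c(1) assms(1,2) by metis+
  then show False using assms(3) by simp
qed

lemma lcaT_incomparable_fork:
  assumes "a \<in> V" "b \<in> V" "(a, b) \<notin> E\<^sup>*" "(b, a) \<notin> E\<^sup>*"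
  obtains c1 c2 where "(lcaT V E a b, c1) \<in> E" "(lcaT V E a b, c2) \<in> E" "c1 \<noteq> c2"
    "(c1, a) \<in> E\<^sup>*" "(c2, b) \<in> E\<^sup>*"
proof -
  let ?v = "lcaT V E a b"
  have "?v \<noteq> a" "?v \<noteq> b" using lcaT_spec(2,3)[OF assms(1,2)] assms(3,4) by auto
  then obtain c1 c2 where c: "(?v, c1) \<in> E" "(c1, a) \<in> E\<^sup>*" "(?v, c2) \<in> E" "(c2, b) \<in> E\<^sup>*"
    using child_on_path lcaT_spec(2,3)[OF assms(1,2)] by metis
  moreover have "c1 \<noteq> c2"
  proof
    assume "c1 = c2"
    then have "(c1, ?v) \<in> E\<^sup>*" using lcaT_spec(4)[OF assms(1,2)] c by blast
    then show False using edge_not_rtrancl_back c(1) by blast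
  qed
  ultimately show ?thesis using that by blast
qed

end

fun upper :: "'v elem \<Rightarrow> 'v" where
  "upper (Vx v) = v"
| "upper (Ed p q) = p"

lemma ele_Vx_right_iff: "ele E a (Vx w) \<longleftrightarrow> tle E (upper a) w"
  by (cases a) auto

lemma lcaS_eq_lcaT_upper: "lcaS V E a b = lcaT V E (upper a) (upper b)"
  unfolding lcaS_def lcaT_def ele_Vx_right_iff by simp

lemma ele_refl: "ele E a a"
  by (cases a) (auto simp: tle_def)

lemma ele_Ed_rightD: "ele E a (Ed w c) \<Longrightarrow> a = Ed w c \<or> tle E (upper a) c"
  by (cases a) auto

context planted_tree
begin

lemma upper_in_V: "is_elem V E a \<Longrightarrow> upper a \<in> V"
  by (cases a) (auto simp: is_elem_def dest: edge_in_V)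

lemma ele_strictly_below_Vx:
  assumes "is_elem V E a" "ele E (Vx s) a" "ele E a (Vx w)" "a \<noteq> Vx w"
  shows "tless E s w"
proof (cases a)
  case (Vx u)
  then have "(u, s) \<in> E\<^sup>*" "(w, u) \<in> E\<^sup>*" "u \<noteq> w"
    using assms by (auto simp: tle_def)
  then show ?thesis
    unfolding tless_def tle_def using rtrancl_antisym rtrancl_trans by metis
next
  case (Ed p q)
  then have pq: "(p, q) \<in> E" "(q, s) \<in> E\<^sup>*" "(w, p) \<in> E\<^sup>*"
    using assms by (auto simp: tle_def is_elem_def)
  then have "(w, s) \<in> E\<^sup>*" by (meson rtrancl_into_rtrancl rtrancl_trans)
  moreover have "s \<noteq> w"
  proof
    assume "s = w"
    then have "(q, p) \<in> E\<^sup>*" using rtrancl_trans[OF pq(2)] pq(3) by simp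
    then show False using pq(1) edge_not_rtrancl_back by blast
  qed
  ultimately show ?thesis unfolding tless_def tle_def by blast
qed

lemma ele_child_edge:
  assumes "is_elem V E a" "ele E (Vx s) a" "ele E a (Vx w)" "a \<noteq> Vx w"
    and "(w, c) \<in> E" "(c, s) \<in> E\<^sup>*"
  shows "ele E a (Ed w c)"
proof (cases a)
  case (Vx u)
  then have "(u, s) \<in> E\<^sup>*" "(w, u) \<in> E\<^sup>*" "u \<noteq> w"
    using assms by (auto simp: tle_def)
  then have "(c, u) \<in> E\<^sup>*"
    using ancestors_comparable nothing_between_edge assms(5,6) by blast
  then show ?thesis using Vx by (simp add: tle_def)
next
  case (Ed p q)
  then have pq: "(p, q) \<in> E" "(q, s) \<in> E\<^sup>*" "(w, p) \<in> E\<^sup>*"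
    using assms by (auto simp: tle_def is_elem_def)
  have "q \<noteq> w" using pq(1,3) edge_not_rtrancl_back by blast
  moreover have "(w, q) \<in> E\<^sup>*" using pq(3,1) by (rule rtrancl_into_rtrancl)
  ultimately have "q = c \<or> (c, q) \<in> E\<^sup>*"
    using ancestors_comparable[OF pq(2) assms(6)] nothing_between_edge[OF assms(5)] by blast
  then consider "q = c" | "(c, p) \<in> E\<^sup>*"
    using pq(1) parent_eq by (metis rtranclE)
  then show ?thesis
  proof cases
    case 1
    then have "p = w" using pq(1) assms(5) parent_eq by blast
    then show ?thesis using Ed 1 by simp
  next
    case 2
    then show ?thesis using Ed by (simp add: tle_def)
  qed
qed

end

locale reconciled_gene_tree =
  fixes VT :: "'g set" and ET :: "('g \<times> 'g) set" and rT :: 'g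
    and VS :: "'s set" and ES :: "('s \<times> 's) set" and rS :: 's
    and \<sigma> :: "'g \<Rightarrow> 's" and \<mu> :: "'g \<Rightarrow> 's elem"
  assumes species_tree: "planted_phylo_tree VS ES rS"
    and gene_tree: "gene_tree VT ET rT \<sigma> VS ES rS"
    and reconciliation: "reconciliation VT ET rT \<sigma> VS ES rS \<mu>"
begin

sublocale S: planted_tree VS ES rS
  using species_tree by unfold_locales

sublocale T: planted_tree VT ET rT
  using gene_tree unfolding gene_tree_def by unfold_locales blast

lemma sigma_in_VS: "z \<in> leaves VT ET rT \<Longrightarrow> \<sigma> z \<in> VS"
  using gene_tree unfolding gene_tree_def leaves_def by blast

lemma mu_is_elem: "v \<in> VT \<Longrightarrow> is_elem VS ES (\<mu> v)"
  and mu_eq_root_iff: "v \<in> VT \<Longrightarrow> \<mu> v = Vx rS \<longleftrightarrow> v = rT"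
  and mu_leaf: "v \<in> leaves VT ET rT \<Longrightarrow> \<mu> v = Vx (\<sigma> v)"
  and mu_mono: "v \<in> VT \<Longrightarrow> w \<in> VT \<Longrightarrow> tless ET v w \<Longrightarrow> ele ES (\<mu> v) (\<mu> w)"
  using reconciliation unfolding reconciliation_def by blast+

lemma speciation_lca:
  assumes "v \<in> VT" "\<mu> v \<in> Vx ` inner VS ES rS"
  obtains c1 c2 where "(v, c1) \<in> ET" "(v, c2) \<in> ET" "c1 \<noteq> c2"
    "\<mu> v = Vx (lcaS VS ES (\<mu> c1) (\<mu> c2))"
  using reconciliation assms unfolding reconciliation_def children_def by blast

lemma speciation_children_incomparable:
  assumes "v \<in> VT" "\<mu> v \<in> Vx ` inner VS ES rS"
    and "(v, c1) \<in> ET" "(v, c2) \<in> ET" "c1 \<noteq> c2"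
  shows "\<not> ele ES (\<mu> c1) (\<mu> c2)"
  using reconciliation assms unfolding reconciliation_def children_def by blast

lemma mu_Vx_if_not_duplication:
  assumes "v \<in> VT" "\<not> duplication ES \<mu> v"
  obtains w where "\<mu> v = Vx w"
  using mu_is_elem[OF assms(1)] assms(2)
  by (cases "\<mu> v") (auto simp: is_elem_def duplication_def)

lemma mu_child_ele: "v \<in> VT \<Longrightarrow> (v, c) \<in> ET \<Longrightarrow> ele ES (\<mu> c) (\<mu> v)"
  using mu_mono T.edge_in_V T.edge_not_rtrancl_back unfolding tless_def tle_def by blast

lemma leaf_ele_mu:
  assumes "z \<in> leaves VT ET rT" "c \<in> VT" "(c, z) \<in> ET\<^sup>*"
  shows "ele ES (Vx (\<sigma> z)) (\<mu> c)"
proof (cases "c = z")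
  case True
  then show ?thesis using mu_leaf assms(1) ele_refl by metis
next
  case False
  then have "tless ET z c" using assms(3) unfolding tless_def tle_def by blast
  then show ?thesis using mu_mono mu_leaf assms unfolding leaves_def by fastforce
qed

lemma speciation_child_mu_neq:
  assumes "v \<in> VT" "\<mu> v \<in> Vx ` inner VS ES rS" "(v, c) \<in> ET"
  shows "\<mu> c \<noteq> \<mu> v"
proof
  assume "\<mu> c = \<mu> v"
  obtain d where "(v, d) \<in> ET" "d \<noteq> c"
    using speciation_lca[OF assms(1,2)] by metis
  then show False
    using mu_child_ele speciation_children_incomparable assms \<open>\<mu> c = \<mu> v\<close> by metis
qed

lemma mu_in_inner_if_child:
  assumes "v \<in> VT" "v \<noteq> rT" "\<mu> v = Vx w" "(w, c) \<in> ES"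
  shows "\<mu> v \<in> Vx ` inner VS ES rS"
  using assms mu_eq_root_iff S.edge_in_V unfolding inner_def children_def by auto

lemma speciation_child_ele_edge:
  assumes "v \<in> VT" "\<mu> v = Vx w" "\<mu> v \<in> Vx ` inner VS ES rS" "(v, c) \<in> ET"
    and "z \<in> leaves VT ET rT" "(c, z) \<in> ET\<^sup>*" "(w, c0) \<in> ES" "(c0, \<sigma> z) \<in> ES\<^sup>*"
  shows "ele ES (\<mu> c) (Ed w c0)"
proof (rule S.ele_child_edge)
  have "c \<in> VT" using assms(4) T.edge_in_V by blast
  then show "is_elem VS ES (\<mu> c)" "ele ES (Vx (\<sigma> z)) (\<mu> c)"
    using mu_is_elem leaf_ele_mu assms(5,6) by blast+
  show "ele ES (\<mu> c) (Vx w)" "\<mu> c \<noteq> Vx w"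
    using mu_child_ele speciation_child_mu_neq assms(1-4) by metis+
qed (use assms(7,8) in blast)+

lemma speciation_child_not_ele_edge:
  assumes "v \<in> VT" "\<mu> v = Vx w" "\<mu> v \<in> Vx ` inner VS ES rS" "(w, c0) \<in> ES"
  obtains c where "(v, c) \<in> ET" "\<not> ele ES (\<mu> c) (Ed w c0)"
proof -
  obtain c1 c2 where c: "(v, c1) \<in> ET" "(v, c2) \<in> ET" "c1 \<noteq> c2"
    and w: "w = lcaT VS ES (upper (\<mu> c1)) (upper (\<mu> c2))"
    using speciation_lca[OF assms(1,3)] assms(2) lcaS_eq_lcaT_upper by (metis elem.inject(1))
  have "(c0, w) \<notin> ES\<^sup>*" using S.edge_not_rtrancl_back assms(4) by blast
  moreover have "(c0, w) \<in> ES\<^sup>*"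
    if "ele ES (\<mu> c1) (Ed w c0)" "ele ES (\<mu> c2) (Ed w c0)"
  proof -
    have "\<mu> c1 \<noteq> Ed w c0"
      using that(2) speciation_children_incomparable[OF assms(1,3) c(2,1)] c(3) by auto
    moreover have "\<mu> c2 \<noteq> Ed w c0"
      using that(1) speciation_children_incomparable[OF assms(1,3) c(1-3)] by auto
    ultimately have "(c0, upper (\<mu> c1)) \<in> ES\<^sup>*" "(c0, upper (\<mu> c2)) \<in> ES\<^sup>*"
      using ele_Ed_rightD[OF that(1)] ele_Ed_rightD[OF that(2)] unfolding tle_def by auto
    moreover have "upper (\<mu> c1) \<in> VS" "upper (\<mu> c2) \<in> VS"
      using c T.edge_in_V mu_is_elem S.upper_in_V by blast+
    ultimately show ?thesis using S.lcaT_spec(4) w by blast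
  qed
  ultimately show ?thesis using that c by blast
qed

lemma speciation_separating_leaf:
  assumes "v \<in> VT" "\<mu> v = Vx w" "\<mu> v \<in> Vx ` inner VS ES rS" "(w, c0) \<in> ES"
    and "(v, cx) \<in> ET" "x \<in> leaves VT ET rT" "(cx, x) \<in> ET\<^sup>*" "(c0, \<sigma> x) \<in> ES\<^sup>*"
  obtains z where "z \<in> leaves VT ET rT" "lcaT VT ET x z = v" "lcaT VS ES (\<sigma> x) (\<sigma> z) = w"
proof -
  obtain c where c: "(v, c) \<in> ET" "\<not> ele ES (\<mu> c) (Ed w c0)"
    using speciation_child_not_ele_edge[OF assms(1-4)] by blast
  then have "c \<noteq> cx" using speciation_child_ele_edge assms by blast
  have "c \<in> VT" "c \<noteq> rT" using c(1) T.edge_in_V T.no_parent_r0 by blast+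
  then obtain z where z: "z \<in> leaves VT ET rT" "(c, z) \<in> ET\<^sup>*" using T.leaf_below by blast
  have "tless ES (\<sigma> z) w"
    using S.ele_strictly_below_Vx mu_is_elem leaf_ele_mu mu_child_ele speciation_child_mu_neq
      \<open>c \<in> VT\<close> z c(1) assms(1-3) by metis
  then obtain c1 where c1: "(w, c1) \<in> ES" "(c1, \<sigma> z) \<in> ES\<^sup>*"
    using S.child_on_path unfolding tless_def tle_def by blast
  then have "c1 \<noteq> c0" using speciation_child_ele_edge assms(1-3) c z by blast
  then have "lcaT VS ES (\<sigma> x) (\<sigma> z) = w" using S.lcaT_at_fork assms(4,8) c1 by metis
  moreover have "lcaT VT ET x z = v" using T.lcaT_at_fork assms(5,7) c(1) z(2) \<open>c \<noteq> cx\<close> by metis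
  ultimately show ?thesis using that z(1) by blast
qed

end

theorem lemma3:
  fixes VT :: "'g set" and ET :: "('g \<times> 'g) set" and rT :: 'g
    and VS :: "'s set" and ES :: "('s \<times> 's) set" and rS :: 's
    and \<sigma> :: "'g \<Rightarrow> 's" and \<mu> :: "'g \<Rightarrow> 's elem" and x y :: 'g
  assumes "planted_phylo_tree VS ES rS"
    and "gene_tree VT ET rT \<sigma> VS ES rS"
    and "reconciliation VT ET rT \<sigma> VS ES rS \<mu>"
    and "axiom_R4 VT ET rT \<sigma> VS ES rS \<mu>"
    and "x \<in> leaves VT ET rT" and "y \<in> leaves VT ET rT"
    and "\<sigma> x \<noteq> \<sigma> y"
    and "eless ES (Vx (lcaS VS ES (Vx (\<sigma> x)) (Vx (\<sigma> y)))) (\<mu> (lcaT VT ET x y))"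
  shows "duplication ES \<mu> (lcaT VT ET x y)"
proof (rule ccontr)
  interpret reconciled_gene_tree VT ET rT VS ES rS \<sigma> \<mu>
    using assms(1-3) by unfold_locales
  define v where "v = lcaT VT ET x y"
  define l where "l = lcaT VS ES (\<sigma> x) (\<sigma> y)"
  have xy: "x \<in> VT" "y \<in> VT" "(x, y) \<notin> ET\<^sup>*" "(y, x) \<notin> ET\<^sup>*"
    using assms(5-7) T.leaf_rtrancl_eq unfolding leaves_def by blast+
  then obtain cx cy where fork: "(v, cx) \<in> ET" "(v, cy) \<in> ET" "cx \<noteq> cy" "(cx, x) \<in> ET\<^sup>*"
    using T.lcaT_incomparable_fork unfolding v_def by metis
  have v: "v \<in> VT" "v \<noteq> rT" using fork T.edge_in_V T.fork_not_r0 by blast+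
  assume "\<not> duplication ES \<mu> (lcaT VT ET x y)"
  then obtain w where w: "\<mu> v = Vx w" using mu_Vx_if_not_duplication v(1) unfolding v_def by blast
  then have "tless ES l w"
    using assms(8) unfolding v_def l_def lcaS_eq_lcaT_upper eless_def tless_def by simp
  then obtain c0 where c0: "(w, c0) \<in> ES" "(c0, l) \<in> ES\<^sup>*"
    using S.child_on_path unfolding tless_def tle_def by blast
  have speciation: "\<mu> v \<in> Vx ` inner VS ES rS" using mu_in_inner_if_child[OF v w c0(1)] .
  have "(c0, \<sigma> x) \<in> ES\<^sup>*"
    using c0(2) S.lcaT_spec(2) sigma_in_VS assms(5,6) rtrancl_trans unfolding l_def by metis
  then obtain z where "z \<in> leaves VT ET rT" "lcaT VT ET x z = v" "lcaT VS ES (\<sigma> x) (\<sigma> z) = w"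
    using speciation_separating_leaf[OF v(1) w speciation c0(1) fork(1) assms(5) fork(4)] by blast
  then have "l = w"
    using assms(4-6) w speciation unfolding axiom_R4_def l_def v_def lcaS_eq_lcaT_upper by fastforce
  then show False using \<open>tless ES l w\<close> unfolding tless_def by blast
qed

end
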